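(* Let $\epsilon>0$ be a constant. There exists a constant $\delta>0$ such that, for all sufficiently large $n$, if $V\subseteq\mathbb{Z}_2^{2n}$ is a uniformly random subspace of dimension $m\ge\epsilon n$, then $\Pr[V\subseteq V^\perp]\le2^{-\delta n^2}$.
   Context: Symplectic inner product on $\mathbb{Z}_2^{2n}$: $(\mathbf a,\mathbf b)\odot(\mathbf a',\mathbf b')=\mathbf a\cdot\mathbf b'+\mathbf a'\cdot\mathbf b\pmod2$. For a subspace $S$, $S^\perp=\{\mathbf v:\mathbf v\odot\mathbf w=0\ \forall\mathbf w\in S\}$ is its symplectic complement; $V\subseteq V^\perp$ means $V$ is isotropic. *)

theory Defs
  imports Complex_Main "HOL-Library.Z2"
begin

text \<open>Vectors of Z_2^{2n}: functions nat => bit vanishing outside coordinates 0..2n-1.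
  A vector v = (a,b) has a = (v 0, ..., v (n-1)) and b = (v n, ..., v (2n-1)).\<close>

definition vecs :: "nat \<Rightarrow> (nat \<Rightarrow> bit) set" where
  "vecs n = {v. \<forall>i\<ge>2*n. v i = 0}"

definition symp :: "nat \<Rightarrow> (nat \<Rightarrow> bit) \<Rightarrow> (nat \<Rightarrow> bit) \<Rightarrow> bit" where
  "symp n v w = (\<Sum>i<n. v i * w (n+i)) + (\<Sum>i<n. w i * v (n+i))"

definition symp_perp :: "nat \<Rightarrow> (nat \<Rightarrow> bit) set \<Rightarrow> (nat \<Rightarrow> bit) set" where
  "symp_perp n S = {v \<in> vecs n. \<forall>w\<in>S. symp n v w = 0}"

definition lincomb :: "(nat \<Rightarrow> bit) set \<Rightarrow> ((nat \<Rightarrow> bit) \<Rightarrow> bit) \<Rightarrow> (nat \<Rightarrow> bit)" where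
  "lincomb B c = (\<lambda>i. \<Sum>b\<in>B. c b * b i)"

definition span2 :: "(nat \<Rightarrow> bit) set \<Rightarrow> (nat \<Rightarrow> bit) set" where
  "span2 B = {lincomb B c | c. True}"

definition lin_indep2 :: "(nat \<Rightarrow> bit) set \<Rightarrow> bool" where
  "lin_indep2 B \<longleftrightarrow> finite B \<and> (\<forall>c. lincomb B c = (\<lambda>i. 0) \<longrightarrow> (\<forall>b\<in>B. c b = 0))"

definition is_subspace :: "nat \<Rightarrow> (nat \<Rightarrow> bit) set \<Rightarrow> bool" where
  "is_subspace n V \<longleftrightarrow> V \<subseteq> vecs n \<and> (\<lambda>i. 0) \<in> V \<and>
     (\<forall>u\<in>V. \<forall>w\<in>V. (\<lambda>i. u i + w i) \<in> V) \<and> (\<forall>a. \<forall>u\<in>V. (\<lambda>i. a * u i) \<in> V)"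

definition subspace_dim :: "nat \<Rightarrow> nat \<Rightarrow> (nat \<Rightarrow> bit) set \<Rightarrow> bool" where
  "subspace_dim n m V \<longleftrightarrow> is_subspace n V \<and>
     (\<exists>B. B \<subseteq> V \<and> lin_indep2 B \<and> card B = m \<and> span2 B = V)"

definition prob_isotropic :: "nat \<Rightarrow> nat \<Rightarrow> real" where
  "prob_isotropic n m =
     real (card {V. subspace_dim n m V \<and> V \<subseteq> symp_perp n V}) / real (card {V. subspace_dim n m V})"

end

theory Submission
  imports Defs "HOL-Library.FuncSet"
begin

text \<open>
  Every m-dimensional subspace has the same number of ordered bases, so the probability is the
  fraction of independent m-lists in Z_2^{2n} whose span is isotropic, which is at most the
  fraction of pairwise orthogonal ones. An isotropic list x_1, ..., x_k can only be extended
  inside the symplectic complement of its span, which has 2^(2n-k) elements because the form is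
  nondegenerate (a character sum over Z_2^{2n} counts it), whereas an independent list has
  2^(2n) - 2^k >= 2^(2n-1) extensions. So the fraction is at most the product of the 2^(1-k) for
  k < m, that is 2^(m - m(m-1)/2), which is 2^(-Omega(n^2)) once m >= epsilon n.
\<close>

text \<open>\<open>Z2\<close> rewrites \<open>+\<close> and \<open>*\<close> on \<^typ>\<open>bit\<close> into XOR and AND;
  we reason in the field instead.\<close>
declare add_bit_eq_xor [simp del] mult_bit_eq_and [simp del]

lemma bit_add_self [simp]: "(x::bit) + x = 0"
  by (cases x) simp_all

lemma bit_add_cancel_left [simp]: "(x::bit) + (x + y) = y"
  by (cases x; cases y) simp_all

lemma card_UNIV_bit: "card (UNIV::bit set) = 2"
proof -
  have "(UNIV::bit set) = {0, 1}" by (auto intro: bit.exhaust)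
  then show ?thesis by (metis card_2_iff zero_neq_one)
qed

subsection \<open>Spans and linear independence\<close>

lemma lincomb_insert:
  assumes "finite B" "x \<notin> B"
  shows "lincomb (insert x B) c = (\<lambda>i. c x * x i + lincomb B c i)"
  using assms by (simp add: lincomb_def)

lemma lincomb_fun_upd_notin:
  assumes "x \<notin> B"
  shows "lincomb B (c(x := a)) = lincomb B c"
  unfolding lincomb_def using assms by (intro ext sum.cong) auto

lemma lincomb_insert_fun_upd:
  assumes "finite B" "x \<notin> B"
  shows "lincomb (insert x B) (c(x := a)) = (\<lambda>i. a * x i + lincomb B c i)"
  by (simp add: lincomb_insert[OF assms] lincomb_fun_upd_notin[OF assms(2)])

lemma lincomb_add: "(\<lambda>i. lincomb B c i + lincomb B d i) = lincomb B (\<lambda>b. c b + d b)"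
  by (simp add: lincomb_def sum.distrib distrib_right)

lemma span2_empty: "span2 {} = {\<lambda>i. 0}"
  by (simp add: span2_def lincomb_def)

lemma lincomb_in_span2: "lincomb B c \<in> span2 B"
  by (auto simp: span2_def)

lemma span2_zero: "(\<lambda>i. 0) \<in> span2 B"
proof -
  have "lincomb B (\<lambda>b. 0) = (\<lambda>i. 0)" by (simp add: lincomb_def)
  then show ?thesis by (metis lincomb_in_span2)
qed

lemma span2_add: "u \<in> span2 B \<Longrightarrow> w \<in> span2 B \<Longrightarrow> (\<lambda>i. u i + w i) \<in> span2 B"
  unfolding span2_def using lincomb_add by blast

lemma span2_smult:
  assumes "u \<in> span2 B"
  shows "(\<lambda>i. a * u i) \<in> span2 B"
proof -
  obtain c where "u = lincomb B c" using assms by (auto simp: span2_def)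
  then have "(\<lambda>i. a * u i) = lincomb B (\<lambda>b. a * c b)"
    by (simp add: lincomb_def sum_distrib_left mult.assoc)
  then show ?thesis by (auto simp: span2_def)
qed

lemma span2_superset:
  assumes "finite B"
  shows "B \<subseteq> span2 B"
proof
  fix b assume "b \<in> B"
  then have "lincomb B (\<lambda>x. if x = b then 1 else 0) = b"
    using assms by (simp add: lincomb_def if_distrib[where f = "\<lambda>a. a * _"] cong: if_cong)
  then show "b \<in> span2 B" by (metis lincomb_in_span2)
qed

lemma span2_insert:
  assumes "finite B" "x \<notin> B"
  shows "span2 (insert x B) = span2 B \<union> (\<lambda>v i. v i + x i) ` span2 B"
proof (intro equalityI subsetI)
  fix v assume "v \<in> span2 (insert x B)"
  then obtain c where v: "v = (\<lambda>i. c x * x i + lincomb B c i)"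
    by (auto simp: span2_def lincomb_insert[OF assms])
  show "v \<in> span2 B \<union> (\<lambda>v i. v i + x i) ` span2 B"
  proof (cases "c x")
    case zero
    then show ?thesis using v by (auto simp: span2_def)
  next
    case one
    then have "v = (\<lambda>i. lincomb B c i + x i)" using v by (simp add: add.commute)
    then show ?thesis by (auto simp: span2_def)
  qed
next
  fix v assume "v \<in> span2 B \<union> (\<lambda>v i. v i + x i) ` span2 B"
  then obtain c and a :: bit where "v = (\<lambda>i. a * x i + lincomb B c i)"
  proof
    assume "v \<in> span2 B"
    then obtain c where "v = lincomb B c" by (auto simp: span2_def)
    then show thesis using that[of 0 c] by simp
  next
    assume "v \<in> (\<lambda>v i. v i + x i) ` span2 B"
    then obtain c where "v = (\<lambda>i. lincomb B c i + x i)" by (auto simp: span2_def)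
    then show thesis using that[of 1 c] by (simp add: add.commute)
  qed
  then have "v = lincomb (insert x B) (c(x := a))" by (simp add: lincomb_insert_fun_upd[OF assms])
  then show "v \<in> span2 (insert x B)" unfolding span2_def by blast
qed

lemma finite_span2: "finite B \<Longrightarrow> finite (span2 B)"
  by (induction B rule: finite_induct) (simp_all add: span2_empty span2_insert)

lemma lin_indep2_finite: "lin_indep2 B \<Longrightarrow> finite B"
  by (simp add: lin_indep2_def)

lemma lin_indep2D: "lin_indep2 B \<Longrightarrow> lincomb B c = (\<lambda>i. 0) \<Longrightarrow> b \<in> B \<Longrightarrow> c b = 0"
  by (simp add: lin_indep2_def)

lemma lin_indep2_insert:
  assumes "finite B" "x \<notin> B"
  shows "lin_indep2 (insert x B) \<longleftrightarrow> lin_indep2 B \<and> x \<notin> span2 B"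
proof
  note extend = lincomb_insert_fun_upd[OF assms]
  assume indep: "lin_indep2 (insert x B)"
  show "lin_indep2 B \<and> x \<notin> span2 B"
  proof
    show "lin_indep2 B" unfolding lin_indep2_def
    proof (intro conjI allI impI ballI)
      fix c b assume "lincomb B c = (\<lambda>i. 0)" and b: "b \<in> B"
      then have "lincomb (insert x B) (c(x := 0)) = (\<lambda>i. 0)" by (simp add: extend)
      then have "(c(x := 0)) b = 0" using lin_indep2D[OF indep] b by blast
      then show "c b = 0" using b assms(2) by (auto split: if_splits)
    qed (rule assms(1))
    show "x \<notin> span2 B"
    proof
      assume "x \<in> span2 B"
      then obtain c where "lincomb B c = x" by (auto simp: span2_def)
      then have "lincomb (insert x B) (c(x := 1)) = (\<lambda>i. 0)" by (simp add: extend)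
      then have "(c(x := 1)) x = 0" using lin_indep2D[OF indep] by blast
      then show False by simp
    qed
  qed
next
  assume indep_B: "lin_indep2 B \<and> x \<notin> span2 B"
  show "lin_indep2 (insert x B)" unfolding lin_indep2_def
  proof (intro conjI allI impI ballI)
    show "finite (insert x B)" using assms by simp
    fix c b assume c: "lincomb (insert x B) c = (\<lambda>i. 0)" and b: "b \<in> insert x B"
    have e: "c x * x i + lincomb B c i = 0" for i
      using fun_cong[OF c, of i] by (simp add: lincomb_insert[OF assms])
    have cx: "c x = 0"
    proof (rule ccontr)
      assume "c x \<noteq> 0"
      then have "x i = lincomb B c i" for i
        using e[of i] by simp (metis add_0_right bit_add_cancel_left add.commute)
      then have "x = lincomb B c" ..
      then show False using indep_B unfolding span2_def by blast
    qed
    then have "lincomb B c = (\<lambda>i. 0)" using e by (intro ext) simp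
    then show "c b = 0" using lin_indep2D indep_B b cx by blast
  qed
qed

lemma card_span2:
  assumes "lin_indep2 B"
  shows "card (span2 B) = 2 ^ card B"
proof -
  from lin_indep2_finite[OF assms] assms show ?thesis
  proof (induction B rule: finite_induct)
    case empty
    then show ?case by (simp add: span2_empty)
  next
    case (insert x B)
    let ?A = "span2 B" and ?f = "\<lambda>v i. v i + x i"
    have "lin_indep2 B" and x: "x \<notin> ?A" using lin_indep2_insert insert by auto
    then have IH: "card ?A = 2 ^ card B" using insert by simp
    have inj: "inj_on ?f ?A"
      by (rule inj_onI) (simp add: fun_eq_iff)
    have "?A \<inter> ?f ` ?A = {}"
    proof (rule ccontr)
      assume "?A \<inter> ?f ` ?A \<noteq> {}"
      then obtain u where "u \<in> ?A" "?f u \<in> ?A" by auto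
      then have "(\<lambda>i. u i + (u i + x i)) \<in> ?A" by (rule span2_add)
      then show False using x by simp
    qed
    then have "card (span2 (insert x B)) = card ?A + card (?f ` ?A)"
      using insert(1) by (simp add: span2_insert[OF insert(1,2)] card_Un_disjoint finite_span2)
    also have "\<dots> = 2 ^ card (insert x B)" using card_image[OF inj] IH insert by simp
    finally show ?case .
  qed
qed

lemma span2_subset_subspace:
  assumes "is_subspace n W" "finite B" "B \<subseteq> W"
  shows "span2 B \<subseteq> W"
  using assms(2,3)
proof (induction B rule: finite_induct)
  case empty
  then show ?case using assms(1) by (simp add: span2_empty is_subspace_def)
next
  case (insert x B)
  then have "span2 B \<subseteq> W" "x \<in> W" by auto
  moreover have "(\<lambda>v i. v i + x i) ` span2 B \<subseteq> W"
    using calculation assms(1) unfolding is_subspace_def by blast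
  ultimately show ?case by (simp add: span2_insert[OF insert(1,2)])
qed

lemma is_subspace_vecs: "is_subspace n (vecs n)"
  by (simp add: is_subspace_def vecs_def)

lemma is_subspace_span2:
  assumes "finite B" "B \<subseteq> vecs n"
  shows "is_subspace n (span2 B)"
  unfolding is_subspace_def
  by (intro conjI ballI allI span2_add span2_smult span2_zero
      span2_subset_subspace[OF is_subspace_vecs assms])

lemma bij_betw_restrict_vecs:
  "bij_betw (\<lambda>v. restrict v {..<2*n}) (vecs n) ({..<2*n} \<rightarrow>\<^sub>E (UNIV::bit set))"
proof (rule bij_betw_imageI)
  show "inj_on (\<lambda>v. restrict v {..<2*n}) (vecs n)"
  proof (rule inj_onI)
    fix v w assume "v \<in> vecs n" "w \<in> vecs n" and eq: "restrict v {..<2*n} = restrict w {..<2*n}"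
    show "v = w"
    proof
      fix i show "v i = w i"
        using \<open>v \<in> vecs n\<close> \<open>w \<in> vecs n\<close> fun_cong[OF eq, of i]
        by (cases "i < 2*n") (auto simp: vecs_def)
    qed
  qed
  show "(\<lambda>v. restrict v {..<2*n}) ` vecs n = {..<2*n} \<rightarrow>\<^sub>E UNIV"
  proof (intro equalityI subsetI)
    fix f :: "nat \<Rightarrow> bit" assume f: "f \<in> {..<2*n} \<rightarrow>\<^sub>E UNIV"
    have "f = restrict (\<lambda>i. if i < 2*n then f i else 0) {..<2*n}"
      using f by (auto simp: fun_eq_iff PiE_def extensional_def)
    moreover have "(\<lambda>i. if i < 2*n then f i else 0) \<in> vecs n" by (simp add: vecs_def)
    ultimately show "f \<in> (\<lambda>v. restrict v {..<2*n}) ` vecs n" by blast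
  qed (clarify, subst restrict_PiE_iff, simp)
qed

lemma finite_vecs: "finite (vecs n)"
proof -
  have "finite (UNIV::bit set)" using card_UNIV_bit card.infinite by fastforce
  then show ?thesis using bij_betw_finite[OF bij_betw_restrict_vecs] by (simp add: finite_PiE)
qed

lemma card_vecs: "card (vecs n) = 2 ^ (2*n)"
  using bij_betw_same_card[OF bij_betw_restrict_vecs] by (simp add: card_PiE card_UNIV_bit)

definition indep_lists :: "(nat \<Rightarrow> bit) set \<Rightarrow> nat \<Rightarrow> (nat \<Rightarrow> bit) list set" where
  "indep_lists W k = {xs. length xs = k \<and> distinct xs \<and> set xs \<subseteq> W \<and> lin_indep2 (set xs)}"

lemma indep_lists_0: "indep_lists W 0 = {[]}"
  by (auto simp: indep_lists_def lin_indep2_def)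

lemma indep_lists_Suc:
  "indep_lists W (Suc k) = (\<lambda>(xs, y). y # xs) ` Sigma (indep_lists W k) (\<lambda>xs. W - span2 (set xs))"
proof (intro equalityI subsetI)
  fix zs assume "zs \<in> indep_lists W (Suc k)"
  then obtain y xs where zs: "zs = y # xs" and l: "length xs = k" "distinct xs" "y \<notin> set xs"
     "set xs \<subseteq> W" "y \<in> W" "lin_indep2 (insert y (set xs))"
    unfolding indep_lists_def by (cases zs) auto
  then have "lin_indep2 (set xs)" "y \<notin> span2 (set xs)"
    using lin_indep2_insert[of "set xs" y] by auto
  then show "zs \<in> (\<lambda>(xs, y). y # xs) ` Sigma (indep_lists W k) (\<lambda>xs. W - span2 (set xs))"
    using zs l unfolding indep_lists_def by auto
next
  fix zs assume "zs \<in> (\<lambda>(xs, y). y # xs) ` Sigma (indep_lists W k) (\<lambda>xs. W - span2 (set xs))"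
  then obtain xs y where zs: "zs = y # xs" and xs: "xs \<in> indep_lists W k"
    and y: "y \<in> W" "y \<notin> span2 (set xs)"
    by auto
  then have "y \<notin> set xs" using span2_superset[of "set xs"] by auto
  then show "zs \<in> indep_lists W (Suc k)"
    using zs xs y lin_indep2_insert[of "set xs" y] unfolding indep_lists_def by auto
qed

lemma finite_indep_lists: "finite W \<Longrightarrow> finite (indep_lists W k)"
  by (induction k) (auto simp: indep_lists_0 indep_lists_Suc)

lemma card_indep_lists:
  assumes "is_subspace n W" "finite W"
  shows "card (indep_lists W k) = (\<Prod>i<k. card W - 2^i)"
proof (induction k)
  case 0
  then show ?case by (simp add: indep_lists_0)
next
  case (Suc k)
  have "card (indep_lists W (Suc k)) = card (Sigma (indep_lists W k) (\<lambda>xs. W - span2 (set xs)))"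
    unfolding indep_lists_Suc by (rule card_image) (auto simp: inj_on_def)
  also have "\<dots> = (\<Sum>xs\<in>indep_lists W k. card (W - span2 (set xs)))"
    using finite_indep_lists[OF assms(2)] assms(2) by (intro card_SigmaI) auto
  also have "\<dots> = (\<Sum>xs\<in>indep_lists W k. card W - 2^k)"
  proof (rule sum.cong)
    fix xs assume "xs \<in> indep_lists W k"
    then have "span2 (set xs) \<subseteq> W" "card (span2 (set xs)) = 2^k" "finite (span2 (set xs))"
      using span2_subset_subspace[OF assms(1)] card_span2[of "set xs"] distinct_card[of xs]
      unfolding indep_lists_def by (auto intro: finite_span2)
    then show "card (W - span2 (set xs)) = card W - 2^k"
      by (simp add: card_Diff_subset)
  qed simp
  also have "\<dots> = (\<Prod>i<Suc k. card W - 2^i)" using Suc by simp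
  finally show ?case .
qed

lemma card_indep_lists_vecs: "card (indep_lists (vecs n) k) = (\<Prod>i<k. 2^(2*n) - 2^i)"
  using card_indep_lists[OF is_subspace_vecs finite_vecs] by (simp add: card_vecs)

subsection \<open>Counting subspaces through their ordered bases\<close>

lemma subspace_dimD:
  assumes "subspace_dim n m V"
  shows "is_subspace n V" "finite V" "card V = 2 ^ m"
proof -
  obtain B where B: "lin_indep2 B" "card B = m" "span2 B = V"
    using assms unfolding subspace_dim_def by blast
  show "is_subspace n V" using assms unfolding subspace_dim_def by blast
  show "finite V" "card V = 2 ^ m"
    using B card_span2[OF B(1)] finite_span2[OF lin_indep2_finite[OF B(1)]] by auto
qed

lemma card_indep_lists_subspace:
  "subspace_dim n m V \<Longrightarrow> card (indep_lists V m) = (\<Prod>i<m. 2^m - 2^i)"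
  using card_indep_lists[OF subspace_dimD(1,2)] subspace_dimD(3) by simp

lemma span2_indep_list_eq:
  assumes "subspace_dim n m V" "xs \<in> indep_lists V m"
  shows "span2 (set xs) = V"
proof (rule card_subset_eq)
  have xs: "distinct xs" "length xs = m" "set xs \<subseteq> V" "lin_indep2 (set xs)"
    using assms(2) unfolding indep_lists_def by auto
  show "finite V" using subspace_dimD[OF assms(1)] by simp
  show "span2 (set xs) \<subseteq> V"
    using span2_subset_subspace[OF subspace_dimD(1)[OF assms(1)]] xs by simp
  show "card (span2 (set xs)) = card V"
    using card_span2[OF xs(4)] distinct_card[OF xs(1)] xs(2) subspace_dimD(3)[OF assms(1)] by simp
qed

lemma subspace_dim_span2:
  assumes "xs \<in> indep_lists (vecs n) m"
  shows "subspace_dim n m (span2 (set xs))"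
proof -
  have xs: "distinct xs" "length xs = m" "set xs \<subseteq> vecs n" "lin_indep2 (set xs)"
    using assms unfolding indep_lists_def by auto
  then show ?thesis
    unfolding subspace_dim_def
    using is_subspace_span2[of "set xs" n] span2_superset[of "set xs"] distinct_card[OF xs(1)]
    by auto
qed

lemma finite_subspace_dim: "finite {V. subspace_dim n m V}"
proof (rule finite_subset)
  show "{V. subspace_dim n m V} \<subseteq> Pow (vecs n)"
    using subspace_dimD(1) unfolding is_subspace_def by blast
  show "finite (Pow (vecs n))" using finite_vecs by simp
qed

lemma card_indep_lists_by_span:
  "card {xs \<in> indep_lists (vecs n) m. P (span2 (set xs))} =
     card {V. subspace_dim n m V \<and> P V} * (\<Prod>i<m. 2^m - 2^i)"
proof -
  let ?S = "{V. subspace_dim n m V \<and> P V}"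
  have "{xs \<in> indep_lists (vecs n) m. P (span2 (set xs))} = (\<Union>V\<in>?S. indep_lists V m)"
  proof (intro equalityI subsetI)
    fix xs assume xs: "xs \<in> {xs \<in> indep_lists (vecs n) m. P (span2 (set xs))}"
    then have "span2 (set xs) \<in> ?S" using subspace_dim_span2 by auto
    moreover have "xs \<in> indep_lists (span2 (set xs)) m"
      using xs span2_superset[of "set xs"] by (auto simp: indep_lists_def)
    ultimately show "xs \<in> (\<Union>V\<in>?S. indep_lists V m)" by blast
  next
    fix xs assume "xs \<in> (\<Union>V\<in>?S. indep_lists V m)"
    then obtain V where V: "subspace_dim n m V" "P V" and xs: "xs \<in> indep_lists V m" by blast
    have "V \<subseteq> vecs n" using subspace_dimD(1)[OF V(1)] by (simp add: is_subspace_def)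
    then show "xs \<in> {xs \<in> indep_lists (vecs n) m. P (span2 (set xs))}"
      using xs V span2_indep_list_eq[OF V(1) xs] by (auto simp: indep_lists_def)
  qed
  also have "card \<dots> = (\<Sum>V\<in>?S. card (indep_lists V m))"
  proof (rule card_UN_disjoint)
    show "finite ?S" by (rule finite_subset[OF _ finite_subspace_dim]) blast
    show "\<forall>V\<in>?S. finite (indep_lists V m)"
      by (auto intro: finite_indep_lists dest: subspace_dimD(2))
    show "\<forall>V\<in>?S. \<forall>W\<in>?S. V \<noteq> W \<longrightarrow> indep_lists V m \<inter> indep_lists W m = {}"
      by (metis (no_types, lifting) disjoint_iff mem_Collect_eq span2_indep_list_eq)
  qed
  also have "\<dots> = (\<Sum>V\<in>?S. \<Prod>i<m. 2^m - 2^i)"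
    by (rule sum.cong) (auto dest: card_indep_lists_subspace)
  also have "\<dots> = card ?S * (\<Prod>i<m. 2^m - 2^i)"
    by simp
  finally show ?thesis .
qed

subsection \<open>The size of a symplectic complement\<close>

lemma symp_add_left: "symp n (\<lambda>i. u i + v i) z = symp n u z + symp n v z"
  unfolding symp_def by (simp only: distrib_right distrib_left sum.distrib ac_simps)

lemma symp_add_right: "symp n y (\<lambda>i. u i + v i) = symp n y u + symp n y v"
  unfolding symp_def by (simp only: distrib_right distrib_left sum.distrib ac_simps)

lemma symp_zero_right: "symp n y (\<lambda>i. 0) = 0"
  by (simp add: symp_def)

lemma symp_unit_low: "j < n \<Longrightarrow> symp n (\<lambda>i. if i = j then 1 else 0) z = z (n + j)"
  by (simp add: symp_def if_distrib[where f = "\<lambda>a. a * _"] cong: if_cong)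

lemma symp_unit_high: "j < n \<Longrightarrow> symp n (\<lambda>i. if i = n + j then 1 else 0) z = z j"
  by (simp add: symp_def if_distrib[where f = "\<lambda>a. _ * a"] cong: if_cong)

lemma symp_nondegenerate:
  assumes "z \<in> vecs n" "z \<noteq> (\<lambda>i. 0)"
  shows "\<exists>e\<in>vecs n. symp n e z = 1"
proof -
  obtain j where j: "z j = 1" using assms(2) by (auto simp: fun_eq_iff)
  have "j < 2*n"
  proof (rule ccontr)
    assume "\<not> j < 2*n"
    then have "z j = 0" using assms(1) by (simp add: vecs_def)
    then show False using j by simp
  qed
  show ?thesis
  proof (cases "j < n")
    case True
    then show ?thesis
      using j symp_unit_high[OF True, of z]
      by (intro bexI[of _ "\<lambda>i. if i = n + j then 1 else 0"]) (auto simp: vecs_def)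
  next
    case False
    define k where "k = j - n"
    then have "j = n + k" "k < n" using False \<open>j < 2*n\<close> by simp_all
    then show ?thesis
      using j symp_unit_low[of k n z]
      by (intro bexI[of _ "\<lambda>i. if i = k then 1 else 0"]) (auto simp: vecs_def)
  qed
qed

definition chi :: "bit \<Rightarrow> real" where
  "chi b = (if b = 0 then 1 else -1)"

lemma chi_simps [simp]: "chi 0 = 1" "chi 1 = -1"
  by (simp_all add: chi_def)

lemma chi_add: "chi (a + b) = chi a * chi b"
  by (cases a; cases b) simp_all

lemma prod_chi: "finite X \<Longrightarrow> (\<Prod>x\<in>X. chi (f x)) = chi (\<Sum>x\<in>X. f x)"
  by (induction X rule: finite_induct) (simp_all add: chi_add)

lemma prod_chi_plus_one:
  assumes "finite B"
  shows "(\<Prod>x\<in>B. chi (f x) + 1) = (if \<forall>x\<in>B. f x = 0 then 2 ^ card B else 0)"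
proof (cases "\<forall>x\<in>B. f x = 0")
  case True
  then show ?thesis by simp
next
  case False
  then obtain x where "x \<in> B" "chi (f x) + 1 = 0" by auto
  then have "(\<Prod>x\<in>B. chi (f x) + 1) = 0" using assms by (intro prod_zero) auto
  then show ?thesis using False by simp
qed

lemma sum_chi_symp:
  assumes "z \<in> vecs n"
  shows "(\<Sum>y\<in>vecs n. chi (symp n y z)) = (if z = (\<lambda>i. 0) then 2 ^ (2*n) else 0)"
proof (cases "z = (\<lambda>i. 0)")
  case True
  then show ?thesis by (simp add: symp_zero_right card_vecs)
next
  case False
  then obtain e where e: "e \<in> vecs n" "symp n e z = 1"
    using symp_nondegenerate[OF assms] by blast
  let ?shift = "\<lambda>y i. y i + e i"
  have "bij_betw ?shift (vecs n) (vecs n)"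
    by (rule bij_betw_byWitness[where f' = ?shift]) (use e(1) in \<open>auto simp: vecs_def add.assoc\<close>)
  then have "(\<Sum>y\<in>vecs n. chi (symp n y z)) = (\<Sum>y\<in>vecs n. chi (symp n (?shift y) z))"
    by (rule sum.reindex_bij_betw[symmetric])
  also have "\<dots> = - (\<Sum>y\<in>vecs n. chi (symp n y z))"
    by (simp add: symp_add_left e(2) chi_add sum_negf)
  finally show ?thesis using False by simp
qed

definition vec_sum :: "(nat \<Rightarrow> bit) set \<Rightarrow> nat \<Rightarrow> bit" where
  "vec_sum X = (\<lambda>i. \<Sum>x\<in>X. x i)"

lemma vec_sum_empty [simp]: "vec_sum {} = (\<lambda>i. 0)"
  by (simp add: vec_sum_def)

lemma vec_sum_in_vecs: "X \<subseteq> vecs n \<Longrightarrow> vec_sum X \<in> vecs n"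
  unfolding vecs_def vec_sum_def by (auto intro!: sum.neutral)

lemma symp_vec_sum_right: "finite X \<Longrightarrow> symp n y (vec_sum X) = (\<Sum>x\<in>X. symp n y x)"
proof (induction X rule: finite_induct)
  case (insert x X)
  then have "vec_sum (insert x X) = (\<lambda>i. x i + vec_sum X i)" by (simp add: vec_sum_def)
  then show ?case using insert by (simp add: symp_add_right)
qed (simp add: symp_zero_right)

lemma vec_sum_nonzero:
  assumes "lin_indep2 B" "X \<subseteq> B" "X \<noteq> {}"
  shows "vec_sum X \<noteq> (\<lambda>i. 0)"
proof
  assume zero: "vec_sum X = (\<lambda>i. 0)"
  have "finite B" using lin_indep2_finite[OF assms(1)] .
  have "lincomb B (\<lambda>b. if b \<in> X then 1 else 0) i = vec_sum X i" for i
  proof -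
    have "lincomb B (\<lambda>b. if b \<in> X then 1 else 0) i = (\<Sum>b\<in>B. if b \<in> X then b i else 0)"
      unfolding lincomb_def by (rule sum.cong) auto
    also have "\<dots> = (\<Sum>b\<in>B \<inter> X. b i)"
      by (rule sum.inter_restrict[symmetric]) fact
    also have "\<dots> = vec_sum X i"
      using assms(2) by (simp add: vec_sum_def Int_absorb1)
    finally show ?thesis .
  qed
  then have comb: "lincomb B (\<lambda>b. if b \<in> X then 1 else 0) = (\<lambda>i. 0)"
    using zero by (simp add: fun_eq_iff)
  obtain x where "x \<in> X" using assms(3) by blast
  then have "(if x \<in> X then 1 else 0) = (0::bit)"
    using lin_indep2D[OF assms(1) comb] assms(2) by blast
  then show False using \<open>x \<in> X\<close> by simp
qed

lemma prod_chi_symp_plus_one: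
  assumes "finite B"
  shows "(\<Prod>x\<in>B. chi (symp n y x) + 1) = (\<Sum>X\<in>Pow B. chi (symp n y (vec_sum X)))"
proof -
  have "(\<Prod>x\<in>B. chi (symp n y x) + 1) = (\<Sum>X\<in>Pow B. \<Prod>x\<in>X. chi (symp n y x))"
    by (simp add: prod_add[OF assms])
  also have "\<dots> = (\<Sum>X\<in>Pow B. chi (symp n y (vec_sum X)))"
  proof (rule sum.cong)
    fix X assume "X \<in> Pow B"
    then have "finite X" using finite_subset[OF _ assms] by blast
    then show "(\<Prod>x\<in>X. chi (symp n y x)) = chi (symp n y (vec_sum X))"
      by (simp add: prod_chi symp_vec_sum_right)
  qed simp
  finally show ?thesis .
qed

lemma symp_perp_antimono: "S \<subseteq> T \<Longrightarrow> symp_perp n T \<subseteq> symp_perp n S"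
  by (auto simp: symp_perp_def)

lemma symp_perp_subset_vecs: "symp_perp n S \<subseteq> vecs n"
  by (auto simp: symp_perp_def)

lemma finite_symp_perp: "finite (symp_perp n S)"
  using finite_subset[OF symp_perp_subset_vecs finite_vecs] .

text \<open>Expand the product of the chi(symp n y x) + 1 over x in B into a sum over subsets X of B
  and sum over y first: the vector sum of X is nonzero unless X is empty, so only X = {} survives.\<close>
lemma card_symp_perp:
  assumes "lin_indep2 B" "B \<subseteq> vecs n"
  shows "card (symp_perp n B) * 2 ^ card B = 2 ^ (2*n)"
proof -
  have fin: "finite B" using lin_indep2_finite[OF assms(1)] .
  have "real (card (symp_perp n B)) * 2 ^ card B = (\<Sum>y\<in>symp_perp n B. 2 ^ card B)"
    by simp
  also have "\<dots> = (\<Sum>y\<in>vecs n. if y \<in> symp_perp n B then 2 ^ card B else 0)"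
    using sum.inter_restrict[OF finite_vecs[of n], of "\<lambda>_. (2::real) ^ card B" "symp_perp n B"]
      symp_perp_subset_vecs[of n B] by (simp add: Int_absorb1 Int_absorb2)
  also have "\<dots> = (\<Sum>y\<in>vecs n. \<Prod>x\<in>B. chi (symp n y x) + 1)"
    by (rule sum.cong) (simp_all add: prod_chi_plus_one[OF fin] symp_perp_def)
  also have "\<dots> = (\<Sum>y\<in>vecs n. \<Sum>X\<in>Pow B. chi (symp n y (vec_sum X)))"
    by (simp add: prod_chi_symp_plus_one[OF fin])
  also have "\<dots> = (\<Sum>X\<in>Pow B. \<Sum>y\<in>vecs n. chi (symp n y (vec_sum X)))"
    by (rule sum.swap)
  also have "\<dots> = (\<Sum>X\<in>Pow B. if X = {} then 2 ^ (2*n) else 0)"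
  proof (rule sum.cong)
    fix X assume "X \<in> Pow B"
    then have "vec_sum X \<in> vecs n" "X \<noteq> {} \<Longrightarrow> vec_sum X \<noteq> (\<lambda>i. 0)"
      using assms vec_sum_in_vecs vec_sum_nonzero by auto
    then show "(\<Sum>y\<in>vecs n. chi (symp n y (vec_sum X))) = (if X = {} then 2 ^ (2*n) else 0)"
      by (simp add: sum_chi_symp)
  qed simp
  also have "\<dots> = 2 ^ (2*n)"
    using fin by (simp add: sum.delta')
  finally have "real (card (symp_perp n B) * 2 ^ card B) = real (2 ^ (2*n))" by simp
  then show ?thesis by (simp only: of_nat_eq_iff)
qed

subsection \<open>Counting isotropic lists\<close>

definition isotropic_lists :: "nat \<Rightarrow> nat \<Rightarrow> (nat \<Rightarrow> bit) list set" where
  "isotropic_lists n k = {xs \<in> indep_lists (vecs n) k. set xs \<subseteq> symp_perp n (set xs)}"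

lemma finite_isotropic_lists: "finite (isotropic_lists n k)"
  unfolding isotropic_lists_def using finite_indep_lists[OF finite_vecs] by simp

lemma isotropic_lists_0: "isotropic_lists n 0 = {[]}"
  by (auto simp: isotropic_lists_def indep_lists_0)

lemma isotropic_lists_Suc_subset:
  "isotropic_lists n (Suc k) \<subseteq>
     (\<lambda>(xs, y). y # xs) ` Sigma (isotropic_lists n k) (\<lambda>xs. symp_perp n (set xs))"
proof
  fix zs assume zs: "zs \<in> isotropic_lists n (Suc k)"
  then obtain xs y where zs_eq: "zs = y # xs" and xs: "xs \<in> indep_lists (vecs n) k"
    and y: "y \<in> vecs n"
    unfolding isotropic_lists_def indep_lists_Suc by auto
  have "set zs \<subseteq> symp_perp n (set zs)" using zs unfolding isotropic_lists_def by simp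
  then have "xs \<in> isotropic_lists n k" "y \<in> symp_perp n (set xs)"
    using xs y unfolding zs_eq isotropic_lists_def symp_perp_def by auto
  then show "zs \<in> (\<lambda>(xs, y). y # xs) ` Sigma (isotropic_lists n k) (\<lambda>xs. symp_perp n (set xs))"
    using zs_eq by auto
qed

lemma card_isotropic_lists_Suc:
  "card (isotropic_lists n (Suc k)) * 2 ^ k \<le> card (isotropic_lists n k) * 2 ^ (2*n)"
proof -
  have fin: "finite (Sigma (isotropic_lists n k) (\<lambda>xs. symp_perp n (set xs)))"
    by (intro finite_SigmaI finite_isotropic_lists finite_symp_perp)
  have "card (isotropic_lists n (Suc k)) \<le> card (Sigma (isotropic_lists n k) (\<lambda>xs. symp_perp n (set xs)))"
    using card_mono[OF finite_imageI[OF fin] isotropic_lists_Suc_subset] card_image_le[OF fin]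
    by (rule le_trans)
  also have "\<dots> = (\<Sum>xs\<in>isotropic_lists n k. card (symp_perp n (set xs)))"
    by (simp add: card_SigmaI finite_isotropic_lists finite_symp_perp)
  finally have "card (isotropic_lists n (Suc k)) * 2 ^ k \<le>
      (\<Sum>xs\<in>isotropic_lists n k. card (symp_perp n (set xs))) * 2 ^ k"
    by (rule mult_right_mono) simp
  also have "\<dots> = (\<Sum>xs\<in>isotropic_lists n k. card (symp_perp n (set xs)) * 2 ^ k)"
    by (rule sum_distrib_right)
  also have "\<dots> = (\<Sum>xs\<in>isotropic_lists n k. 2 ^ (2*n))"
  proof (rule sum.cong)
    fix xs assume "xs \<in> isotropic_lists n k"
    then have "lin_indep2 (set xs)" "set xs \<subseteq> vecs n" "card (set xs) = k"
      by (auto simp: isotropic_lists_def indep_lists_def distinct_card)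
    then show "card (symp_perp n (set xs)) * 2 ^ k = 2 ^ (2*n)"
      using card_symp_perp by metis
  qed simp
  finally show ?thesis by simp
qed

lemma card_isotropic_lists_le:
  "k \<le> 2*n \<Longrightarrow>
     card (isotropic_lists n k) * 2 ^ (\<Sum>i<k. i) \<le> 2 ^ k * card (indep_lists (vecs n) k)"
proof (induction k)
  case 0
  then show ?case by (simp add: isotropic_lists_0 indep_lists_0)
next
  case (Suc k)
  let ?A = "card (isotropic_lists n k)" and ?T = "card (indep_lists (vecs n) k)"
  have IH: "?A * 2 ^ (\<Sum>i<k. i) \<le> 2 ^ k * ?T" using Suc by simp
  have "2 ^ Suc k \<le> (2::nat) ^ (2*n)" using Suc(2) by (intro power_increasing) auto
  then have half: "2 ^ (2*n) \<le> 2 * (2 ^ (2*n) - 2 ^ k :: nat)" by simp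
  have "card (isotropic_lists n (Suc k)) * 2 ^ (\<Sum>i<Suc k. i)
      = (card (isotropic_lists n (Suc k)) * 2 ^ k) * 2 ^ (\<Sum>i<k. i)"
    by (simp add: power_add)
  also have "\<dots> \<le> (?A * 2 ^ (\<Sum>i<k. i)) * 2 ^ (2*n)"
    using card_isotropic_lists_Suc[of n k] by (simp add: mult_right_mono)
  also have "\<dots> \<le> (2 ^ k * ?T) * (2 * (2 ^ (2*n) - 2 ^ k))"
    using mult_le_mono[OF IH half] .
  also have "\<dots> = 2 ^ Suc k * card (indep_lists (vecs n) (Suc k))"
    by (simp add: card_indep_lists_vecs)
  finally show ?case .
qed

lemma card_isotropic_subspaces_le:
  "card {V. subspace_dim n m V \<and> V \<subseteq> symp_perp n V} * (\<Prod>i<m. 2^m - 2^i)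
     \<le> card (isotropic_lists n m)"
proof -
  have "card {V. subspace_dim n m V \<and> V \<subseteq> symp_perp n V} * (\<Prod>i<m. 2^m - 2^i)
      = card {xs \<in> indep_lists (vecs n) m. span2 (set xs) \<subseteq> symp_perp n (span2 (set xs))}"
    by (rule card_indep_lists_by_span[symmetric])
  also have "\<dots> \<le> card (isotropic_lists n m)"
  proof (rule card_mono[OF finite_isotropic_lists], safe)
    fix xs assume xs: "xs \<in> indep_lists (vecs n) m"
      and iso: "span2 (set xs) \<subseteq> symp_perp n (span2 (set xs))"
    have "set xs \<subseteq> span2 (set xs)" by (simp add: span2_superset)
    with iso have "set xs \<subseteq> symp_perp n (set xs)"
      using symp_perp_antimono by blast
    with xs show "xs \<in> isotropic_lists n m" by (simp add: isotropic_lists_def)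
  qed
  finally show ?thesis .
qed

lemma prob_isotropic_le:
  assumes "m \<le> 2*n"
  shows "prob_isotropic n m \<le> 2 ^ m / 2 ^ (\<Sum>i<m. i)"
proof -
  define c :: nat where "c = (\<Prod>i<m. 2^m - 2^i)"
  let ?I = "{V. subspace_dim n m V \<and> V \<subseteq> symp_perp n V}"
  let ?T = "indep_lists (vecs n) m" and ?A = "isotropic_lists n m"
  have total: "card ?T = card {V. subspace_dim n m V} * c"
    using card_indep_lists_by_span[of n m "\<lambda>_. True"] by (simp add: c_def)
  have iso: "real (card ?I * c) \<le> real (card ?A)"
    using card_isotropic_subspaces_le[of n m] by (simp only: c_def of_nat_le_iff)
  have "c > 0" unfolding c_def by (intro prod_pos) (auto intro: power_strict_increasing)
  have "card ?T > 0"
    unfolding card_indep_lists_vecs using assms by (intro prod_pos) (auto intro: power_strict_increasing)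
  have "real (card ?A * 2 ^ (\<Sum>i<m. i)) \<le> real (2 ^ m * card ?T)"
    using card_isotropic_lists_le[OF assms] by (simp only: of_nat_le_iff)
  then have ratio: "real (card ?A) / real (card ?T) \<le> 2 ^ m / 2 ^ (\<Sum>i<m. i)"
    using \<open>card ?T > 0\<close> by (simp add: divide_simps)
  have "prob_isotropic n m = real (card ?I * c) / real (card ?T)"
    using \<open>c > 0\<close> by (simp add: prob_isotropic_def total)
  also have "\<dots> \<le> real (card ?A) / real (card ?T)"
    using iso by (rule divide_right_mono) simp
  finally show ?thesis using ratio by linarith
qed

lemma real_sum_lessThan_id: "real (\<Sum>i<k. i) = real k * (real k - 1) / 2"
  by (induction k) (simp_all add: field_simps)

lemma linear_minus_half_square_le:
  fixes a x :: real
  assumes "6 \<le> a" "a \<le> x"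
  shows "x - x * (x - 1) / 2 \<le> - (a^2 / 4)"
proof -
  have "a^2 \<le> x^2" using assms by (intro power_mono) auto
  moreover have "6 * x \<le> x * x" using assms by (intro mult_right_mono) auto
  ultimately show ?thesis by (simp add: power2_eq_square field_simps)
qed

theorem lemmaD4:
  fixes \<epsilon> :: real
  assumes "\<epsilon> > 0"
  shows "\<exists>\<delta>>0. \<exists>N. \<forall>n\<ge>N. \<forall>m. \<epsilon> * real n \<le> real m \<and> m \<le> 2*n \<longrightarrow>
           prob_isotropic n m \<le> 2 powr (- \<delta> * (real n)^2)"
proof (intro exI[of _ "\<epsilon>^2/4"] exI[of _ "nat \<lceil>6/\<epsilon>\<rceil>"] conjI allI impI)
  show "\<epsilon>^2/4 > 0" using assms by simp
  fix n m :: nat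
  assume n: "nat \<lceil>6/\<epsilon>\<rceil> \<le> n" and m: "\<epsilon> * real n \<le> real m \<and> m \<le> 2*n"
  have "6 \<le> \<epsilon> * real n" using n assms by (simp add: field_simps)
  have "prob_isotropic n m \<le> 2 ^ m / 2 ^ (\<Sum>i<m. i)"
    using prob_isotropic_le m by blast
  also have "\<dots> = 2 powr (real m - real (\<Sum>i<m. i))"
    by (simp only: powr_diff powr_realpow zero_less_numeral)
  also have "\<dots> = 2 powr (real m - real m * (real m - 1) / 2)"
    by (simp only: real_sum_lessThan_id)
  also have "\<dots> \<le> 2 powr (- (\<epsilon>^2/4) * (real n)^2)"
    using linear_minus_half_square_le[OF \<open>6 \<le> \<epsilon> * real n\<close>] m
    by (simp add: power_mult_distrib)
  finally show "prob_isotropic n m \<le> 2 powr (- (\<epsilon>^2/4) * (real n)^2)" .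
qed

end
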